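(* Let $P(x)=a_nx^n+a_{n-1}x^{n-1}+\cdots+a_1x$ with integer coefficients $a_i\ge 0$, $a_n\ne 0$, and $\gcd(a_n,\dots,a_1)=1$. For integers $0<t<a$ define $m_{a,t}=\dfrac{P(a)}{\gcd(P(a),P(t))}$. Then \[ \mathsf{dens}(\mathcal{L}(a_n,\dots,a_1))=\lim_{N\to\infty}\frac{\displaystyle\sum_{a=1}^{N}\ \sum_{J\subseteq\{1,\dots,a-1\}}(-1)^{|J|}\left\lfloor\frac{N}{\operatorname{lcm}(m_{a,t}:t\in J)}\right\rfloor}{N^2}. \]
   Context: $\mathbb{N}$ denotes the positive integers; $\operatorname{lcm}$ over the empty set is $1$. The family $\mathcal{F}(a_n,\dots,a_1)=\{y=q(a_nx^n+\cdots+a_1x): q\in\mathbb{Q}^+\}$. A point $(r,s)\in\mathbb{N}^2$ is $\mathcal{F}(a_n,\dots,a_1)$-visible if there is $q\in\mathbb{Q}^+$ with $s=q(a_nr^n+\cdots+a_1r)$ and no other point of $\mathbb{N}^2$ lies on the curve $y=q(a_nx^n+\cdots+a_1x)$ between the origin and $(r,s)$; $\mathcal{L}(a_n,\dots,a_1)$ is the set of all such points. For $S\subseteq\mathbb{N}^2$, $\mathsf{dens}(S)=\lim_{N\to\infty}|S\cap R_N|/N^2$ (when the limit exists), where $R_N=\{(x,y)\in\mathbb{Z}^2:1\le x,y\le N\}$. *)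

theory Defs
  imports Complex_Main
begin

definition polyP :: "(nat \<Rightarrow> int) \<Rightarrow> nat \<Rightarrow> int \<Rightarrow> int" where
  "polyP a n x = (\<Sum>i=1..n. a i * x ^ i)"

definition visible :: "(nat \<Rightarrow> int) \<Rightarrow> nat \<Rightarrow> nat \<times> nat \<Rightarrow> bool" where
  "visible a n p \<longleftrightarrow> (case p of (r, s) \<Rightarrow>
     1 \<le> r \<and> 1 \<le> s \<and>
     (\<exists>q::rat. q > 0 \<and> of_nat s = q * of_int (polyP a n (int r)) \<and>
        \<not> (\<exists>x y::nat. 1 \<le> x \<and> x < r \<and> 1 \<le> y \<and>
              of_nat y = q * of_int (polyP a n (int x)))))"

definition visL :: "(nat \<Rightarrow> int) \<Rightarrow> nat \<Rightarrow> (nat \<times> nat) set" where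
  "visL a n = {p. visible a n p}"

definition mval :: "(nat \<Rightarrow> int) \<Rightarrow> nat \<Rightarrow> nat \<Rightarrow> nat \<Rightarrow> int" where
  "mval a n b t = polyP a n (int b) div gcd (polyP a n (int b)) (polyP a n (int t))"

definition rhs_num :: "(nat \<Rightarrow> int) \<Rightarrow> nat \<Rightarrow> nat \<Rightarrow> real" where
  "rhs_num a n N = (\<Sum>b=1..N. \<Sum>J\<in>Pow {1..b-1}.
      (-1) ^ card J * of_int \<lfloor>real N / real_of_int (Lcm (mval a n b ` J))\<rfloor>)"

end

theory Submission
  imports Defs
begin

text \<open>Any curve of the family through \<open>(r, s)\<close> has \<open>q = s / P(r)\<close>, and it passes through a
  lattice point with abscissa \<open>t\<close> iff \<open>P(r)\<close> divides \<open>s P(t)\<close>, i.e. iff \<open>m(r, t)\<close> divides \<open>s\<close>.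
  So the visible points with abscissa \<open>r \<le> N\<close> are the \<open>s \<le> N\<close> divisible by none of the
  \<open>m(r, t)\<close>, \<open>0 < t < r\<close>, and inclusion-exclusion over these divisibility conditions counts them
  by the inner sum of the right-hand side. The two numerators therefore agree for every \<open>N\<close>.\<close>

lemma dvd_mult_iff_div_gcd_dvd:
  fixes a b c :: "'a::ring_gcd"
  assumes "a \<noteq> 0"
  shows "a dvd c * b \<longleftrightarrow> a div gcd a b dvd c"
proof -
  define g where "g = gcd a b"
  have "g \<noteq> 0" using assms by (simp add: g_def)
  have a: "a = g * (a div g)" and b: "b = g * (b div g)" by (simp_all add: g_def)
  have "coprime (a div g) (b div g)"
    using assms by (simp add: g_def div_gcd_coprime)
  have "a dvd c * b \<longleftrightarrow> g * (a div g) dvd g * (c * (b div g))"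
    by (subst a, subst b) (simp add: ac_simps)
  also have "\<dots> \<longleftrightarrow> a div g dvd c"
    using \<open>g \<noteq> 0\<close> \<open>coprime (a div g) (b div g)\<close> by (simp add: coprime_dvd_mult_left_iff)
  finally show ?thesis by (simp add: g_def)
qed

lemma ex_nat_eq_divide_mult_iff_dvd:
  fixes A B :: int and s :: nat
  assumes "A > 0" "B > 0" "s > 0"
  shows "(\<exists>y::nat. 1 \<le> y \<and> of_nat y = of_nat s / of_int A * (of_int B :: rat)) \<longleftrightarrow> A dvd int s * B"
proof
  assume "\<exists>y::nat. 1 \<le> y \<and> of_nat y = of_nat s / of_int A * (of_int B :: rat)"
  then obtain y :: nat where "of_nat y = of_nat s / of_int A * (of_int B :: rat)" by blast
  then have "(of_int (int y * A) :: rat) = of_int (int s * B)"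
    using assms by (simp add: field_simps)
  then have "int s * B = A * int y" by (simp only: of_int_eq_iff ac_simps)
  then show "A dvd int s * B" ..
next
  assume "A dvd int s * B"
  then obtain k where k: "int s * B = A * k" ..
  then have "k > 0"
    using assms by (metis of_nat_0_less_iff mult_pos_pos zero_less_mult_pos)
  have "(of_int k :: rat) = of_nat s / of_int A * of_int B"
  proof -
    have "(of_int (A * k) :: rat) = of_nat s * of_int B"
      by (simp flip: k)
    then show ?thesis using assms by (simp add: field_simps)
  qed
  then show "\<exists>y::nat. 1 \<le> y \<and> of_nat y = of_nat s / of_int A * (of_int B :: rat)"
    using \<open>k > 0\<close> by (intro exI[of _ "nat k"]) simp
qed

lemma card_multiples_atLeastAtMost:
  fixes e N :: nat
  shows "card {s\<in>{1..N}. e dvd s} = N div e"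
proof (induction N)
  case 0
  then show ?case by simp
next
  case (Suc N)
  have "{s\<in>{1..Suc N}. e dvd s} = {s\<in>{1..N}. e dvd s} \<union> (if e dvd Suc N then {Suc N} else {})"
    by (auto simp: le_Suc_eq)
  then show ?case
    using Suc by (auto simp: div_Suc dvd_eq_mod_eq_0)
qed

lemma card_int_multiples_atLeastAtMost:
  fixes d :: int
  assumes "d \<ge> 0"
  shows "int (card {s\<in>{1..N}. d dvd int s}) = \<lfloor>real N / real_of_int d\<rfloor>"
proof -
  obtain e where e: "d = int e" using assms nonneg_int_cases by blast
  have "\<lfloor>real N / real_of_int d\<rfloor> = int (N div e)"
    unfolding e by (metis floor_divide_of_nat_eq of_int_of_nat_eq)
  then show ?thesis
    using card_multiples_atLeastAtMost by (simp add: e)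
qed

lemma card_Diff_UNION_inclusion_exclusion:
  assumes "finite U" "finite T"
  shows "(of_nat (card (U - (\<Union>t\<in>T. X t))) :: 'b::ring_1)
    = (\<Sum>J\<in>Pow T. (-1) ^ card J * of_nat (card (U \<inter> (\<Inter>t\<in>J. X t))))"
proof -
  interpret Incl_Excl finite "of_nat \<circ> card :: 'a set \<Rightarrow> 'b"
    by unfold_locales (auto simp: card_Un_disjnt)
  define Y where "Y t = U \<inter> X t" for t
  have Y_Inter: "(\<Inter>t\<in>J. Y t) = U \<inter> (\<Inter>t\<in>J. X t)" if "J \<noteq> {}" for J
    using that by (auto simp: Y_def)
  have nonempty: "{J. J \<subseteq> T \<and> J \<noteq> {}} = Pow T - {{}}" by auto
  have "U - (\<Union>t\<in>T. X t) = U - (\<Union>t\<in>T. Y t)" by (auto simp: Y_def)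
  moreover have "(\<Union>t\<in>T. Y t) \<subseteq> U" by (auto simp: Y_def)
  ultimately have "(of_nat (card (U - (\<Union>t\<in>T. X t))) :: 'b)
      = of_nat (card U) - of_nat (card (\<Union>t\<in>T. Y t))"
    using assms by (simp add: card_Diff_subset card_mono finite_subset of_nat_diff)
  also have "(of_nat (card (\<Union>t\<in>T. Y t)) :: 'b)
      = (\<Sum>J\<in>Pow T - {{}}. (-1) ^ (card J + 1) * of_nat (card (U \<inter> (\<Inter>t\<in>J. X t))))"
    using restricted_indexed[of T Y] assms Y_Inter by (simp add: Y_def nonempty)
  finally show ?thesis
    using assms by (simp add: sum.remove[of "Pow T" "{}"] sum_negf)
qed

lemma polyP_pos:
  assumes "n \<ge> 1" "\<forall>i\<in>{1..n}. a i \<ge> 0" "a n \<noteq> 0" "x \<ge> 1"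
  shows "polyP a n x > 0"
proof -
  have "0 < a n * x ^ n" using assms by force
  also have "\<dots> \<le> (\<Sum>i=1..n. a i * x ^ i)"
    by (rule member_le_sum) (use assms in auto)
  finally show ?thesis unfolding polyP_def .
qed

lemma visible_iff_not_mval_dvd:
  assumes "n \<ge> 1" "\<forall>i\<in>{1..n}. a i \<ge> 0" "a n \<noteq> 0" "r \<ge> 1" "s \<ge> 1"
  shows "visible a n (r, s) \<longleftrightarrow> (\<forall>t\<in>{1..r-1}. \<not> mval a n r t dvd int s)"
proof -
  define q :: rat where "q = of_nat s / of_int (polyP a n (int r))"
  have P_pos: "polyP a n (int x) > 0" if "x \<ge> 1" for x
    using polyP_pos assms that by simp
  have "q > 0" using P_pos assms by (simp add: q_def)
  moreover have "of_nat s = p * of_int (polyP a n (int r)) \<longleftrightarrow> p = q" for p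
    using P_pos[of r] assms by (auto simp: q_def field_simps)
  ultimately have "visible a n (r, s) \<longleftrightarrow>
      (\<forall>x\<in>{1..r-1}. \<not> (\<exists>y::nat. 1 \<le> y \<and> of_nat y = q * of_int (polyP a n (int x))))"
    using assms unfolding visible_def by auto
  also have "\<dots> \<longleftrightarrow> (\<forall>t\<in>{1..r-1}. \<not> mval a n r t dvd int s)"
  proof (rule ball_cong[OF refl])
    fix t assume "t \<in> {1..r-1}"
    then have "(\<exists>y::nat. 1 \<le> y \<and> of_nat y = q * of_int (polyP a n (int t)))
        \<longleftrightarrow> polyP a n (int r) dvd int s * polyP a n (int t)"
      using P_pos[of r] P_pos[of t] assms unfolding q_def
      by (intro ex_nat_eq_divide_mult_iff_dvd) auto
    also have "\<dots> \<longleftrightarrow> mval a n r t dvd int s"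
      using P_pos[of r] assms unfolding mval_def by (simp add: dvd_mult_iff_div_gcd_dvd)
    finally show "\<not> (\<exists>y::nat. 1 \<le> y \<and> of_nat y = q * of_int (polyP a n (int t)))
        \<longleftrightarrow> \<not> mval a n r t dvd int s" by simp
  qed
  finally show ?thesis .
qed

lemma card_visL_box_eq_rhs_num:
  assumes "n \<ge> 1" "\<forall>i\<in>{1..n}. a i \<ge> 0" "a n \<noteq> 0"
  shows "real (card (visL a n \<inter> ({1..N} \<times> {1..N}))) = rhs_num a n N"
proof -
  define multiples where "multiples b t = {s. mval a n b t dvd int s}" for b t
  define column where "column b = {1..N} - (\<Union>t\<in>{1..b-1}. multiples b t)" for b
  have "visL a n \<inter> ({1..N} \<times> {1..N}) = Sigma {1..N} column"
    using visible_iff_not_mval_dvd[OF assms] by (auto simp: visL_def column_def multiples_def)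
  then have "real (card (visL a n \<inter> ({1..N} \<times> {1..N}))) = (\<Sum>b=1..N. real (card (column b)))"
    by (simp add: column_def)
  also have "\<dots> = rhs_num a n N"
    unfolding rhs_num_def
  proof (rule sum.cong[OF refl])
    fix b
    have "real (card (column b))
        = (\<Sum>J\<in>Pow {1..b-1}. (-1) ^ card J * real (card ({1..N} \<inter> (\<Inter>t\<in>J. multiples b t))))"
      unfolding column_def by (rule card_Diff_UNION_inclusion_exclusion) auto
    also have "\<dots> = (\<Sum>J\<in>Pow {1..b-1}.
        (-1) ^ card J * of_int \<lfloor>real N / real_of_int (Lcm (mval a n b ` J))\<rfloor>)"
    proof (rule sum.cong[OF refl])
      fix J
      have "{1..N} \<inter> (\<Inter>t\<in>J. multiples b t) = {s\<in>{1..N}. Lcm (mval a n b ` J) dvd int s}"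
        by (auto simp: multiples_def Lcm_dvd_iff)
      then have "int (card ({1..N} \<inter> (\<Inter>t\<in>J. multiples b t)))
          = \<lfloor>real N / real_of_int (Lcm (mval a n b ` J))\<rfloor>"
        using card_int_multiples_atLeastAtMost[of "Lcm (mval a n b ` J)" N] by simp
      then show "(-1) ^ card J * real (card ({1..N} \<inter> (\<Inter>t\<in>J. multiples b t)))
          = (-1) ^ card J * of_int \<lfloor>real N / real_of_int (Lcm (mval a n b ` J))\<rfloor>"
        by (metis of_int_of_nat_eq)
    qed
    finally show "real (card (column b)) = (\<Sum>J\<in>Pow {1..b-1}.
        (-1) ^ card J * of_int \<lfloor>real N / real_of_int (Lcm (mval a n b ` J))\<rfloor>)" .
  qed
  finally show ?thesis .
qed

theorem lemma3p9:
  fixes a :: "nat \<Rightarrow> int" and n :: nat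
  assumes "n \<ge> 1"
    and "\<forall>i\<in>{1..n}. a i \<ge> 0"
    and "a n \<noteq> 0"
    and "Gcd (a ` {1..n}) = 1"
  shows "\<forall>d::real.
     ((\<lambda>N. real (card (visL a n \<inter> ({1..N} \<times> {1..N}))) / real N ^ 2) \<longlonglongrightarrow> d)
     \<longleftrightarrow> ((\<lambda>N. rhs_num a n N / real N ^ 2) \<longlonglongrightarrow> d)"
  using card_visL_box_eq_rhs_num[OF assms(1-3)] by simp

end
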